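(* Under the setting described in the context, let $f\in C(\Omega)$ and let $$f_{\min}(x)=\frac{\int_\Omega f(y)\psi_h(x-y)\,d\mu(y)}{\int_\Omega \psi_h(x-t)\,d\mu(t)},\qquad x\in\Omega.$$ Then there is a constant $C>0$, independent of $h$, such that for all $0<h<1$ and all $1\le p\le\infty$, $$\|f-f_{\min}\|_{L^p(\Omega)}\le C\,\omega_f(h).$$
   Context: Let $d\ge 1$ and let $\Omega\subset\mathbb{R}^d$ be a compact convex domain with Lipschitz boundary. Let $\mu$ be a probability measure on $\Omega$ such that: (1) there is $C_1>0$ with $\mu(\Omega\cap B(x,\alpha))\ge C_1\, m(B(x,\alpha))$ for all $x\in\Omega$ and $0<\alpha\le 1$ ($B(x,\alpha)$ the Euclidean ball, $m$ Lebesgue measure); (2) $\mu$ extends to a finite positive measure $\mu^*$ on $\mathbb{R}^d$ with $\widehat{\mu^*}\in L^1(\mathbb{R}^d)$. Let $\psi\in C(\mathbb{R}^d)$ be nonnegative with $\int_{\mathbb{R}^d}\psi=1$, $\int_{\mathbb{R}^d}|x|\psi(x)\,dx<\infty$, and $\psi(x)\ge C_\psi>0$ for $|x|\le1$; $\psi_h(x)=h^{-d}\psi(x/h)$. $L^p(\Omega)$ norms are with respect to Lebesgue measure. The modulus of continuity is $\omega_f(t)=\sup\{|f(x)-f(y)|: x,y\in\Omega,\ |x-y|\le t\}$. *)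

theory Defs
  imports "HOL-Analysis.Analysis" "HOL-Probability.Probability"
begin

text \<open>Lipschitz boundary (for a closed domain, described via its interior):
  near every boundary point the interior is, after choosing a unit direction e,
  the strict supergraph of a Lipschitz function defined on the hyperplane orthogonal to e.\<close>
definition lipschitz_boundary :: "'a::euclidean_space set \<Rightarrow> bool" where
  "lipschitz_boundary \<Omega> \<longleftrightarrow>
     (\<forall>x\<in>frontier \<Omega>. \<exists>r>0. \<exists>e::'a. norm e = 1 \<and>
        (\<exists>(g::'a \<Rightarrow> real) L. (\<forall>y z. \<bar>g y - g z\<bar> \<le> L * norm (y - z)) \<and>
           interior \<Omega> \<inter> ball x r = {z \<in> ball x r. z \<bullet> e > g (z - (z \<bullet> e) *\<^sub>R e)}))"

definition fourier_measure :: "'a::euclidean_space measure \<Rightarrow> 'a \<Rightarrow> complex" where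
  "fourier_measure M \<xi> = integral\<^sup>L M (\<lambda>x. cis (- 2 * pi * (x \<bullet> \<xi>)))"

definition psi_scaled :: "('a::euclidean_space \<Rightarrow> real) \<Rightarrow> real \<Rightarrow> 'a \<Rightarrow> real" where
  "psi_scaled \<psi> h x = inverse (h ^ DIM('a)) * \<psi> (inverse h *\<^sub>R x)"

definition f_min :: "'a::euclidean_space measure \<Rightarrow> 'a set \<Rightarrow> ('a \<Rightarrow> real) \<Rightarrow> real
    \<Rightarrow> ('a \<Rightarrow> real) \<Rightarrow> 'a \<Rightarrow> real" where
  "f_min \<mu> \<Omega> \<psi> h f x =
     (LINT y:\<Omega>|\<mu>. f y * psi_scaled \<psi> h (x - y)) / (LINT t:\<Omega>|\<mu>. psi_scaled \<psi> h (x - t))"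

definition modulus :: "'a::euclidean_space set \<Rightarrow> ('a \<Rightarrow> real) \<Rightarrow> real \<Rightarrow> real" where
  "modulus \<Omega> f t = Sup {\<bar>f x - f y\<bar> | x y. x \<in> \<Omega> \<and> y \<in> \<Omega> \<and> norm (x - y) \<le> t}"

definition Lp_norm :: "'a::euclidean_space set \<Rightarrow> ('a \<Rightarrow> real) \<Rightarrow> real \<Rightarrow> real" where
  "Lp_norm \<Omega> g p = (LINT x:\<Omega>|lebesgue. \<bar>g x\<bar> powr p) powr (1 / p)"

definition Linf_norm :: "'a::euclidean_space set \<Rightarrow> ('a \<Rightarrow> real) \<Rightarrow> ereal" where
  "Linf_norm \<Omega> g = esssup (restrict_space lebesgue \<Omega>) (\<lambda>x. ereal \<bar>g x\<bar>)"

end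

theory Submission
  imports Defs
begin

text \<open>
  The error \<open>f x - f_min x\<close> is the \<open>\<psi>\<^sub>h\<close>-weighted \<open>\<mu>\<close>-average of \<open>f x - f y\<close> over \<open>\<Omega>\<close>.
  On a convex set \<open>|f x - f y| \<le> \<omega>(h) (1 + |x - y| / h)\<close>, so the error is at most
  \<open>\<omega>(h) (1 + E / D)\<close>, where \<open>D = \<integral>\<^sub>\<Omega> \<psi>\<^sub>h(x - y) d\<mu>(y)\<close> and
  \<open>E = \<integral>\<^sub>\<Omega> |x - y| / h \<psi>\<^sub>h(x - y) d\<mu>(y)\<close>. The ball condition on \<open>\<mu>\<close> bounds \<open>D\<close> below
  by \<open>C\<^sub>\<psi> C\<^sub>1 |B(0,1)|\<close>. Because the extension \<open>\<mu>\<^sup>*\<close> has an integrable Fourier transform,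
  Fourier inversion against Gaussians shows that \<open>\<mu>\<^sup>*\<close> has a density bounded by the \<open>L\<^sup>1\<close> norm
  \<open>K\<close> of that transform, and rescaling gives \<open>E \<le> K \<integral> |w| \<psi>(w) dw\<close>. The resulting pointwise
  bound is uniform in \<open>x \<in> \<Omega>\<close> and \<open>h\<close>, and integrating it over the compact set \<open>\<Omega>\<close> gives the
  \<open>L\<^sup>p\<close> bounds for all \<open>p\<close> at once.
\<close>

section \<open>The standard Gaussian on a Euclidean space\<close>

lemma inner_sum_Basis_scaleR:
  fixes f :: "'a::euclidean_space \<Rightarrow> real"
  assumes "b \<in> Basis"
  shows "(\<Sum>b'\<in>Basis. f b' *\<^sub>R b') \<bullet> b = f b"
  using assms by (simp add: inner_sum_left inner_Basis if_distrib sum.delta cong: if_cong)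

lemma
  fixes F :: "'a::euclidean_space \<Rightarrow> real \<Rightarrow> 'b::{real_normed_field,banach,second_countable_topology}"
  assumes int: "\<And>b. b \<in> Basis \<Longrightarrow> integrable lborel (F b)"
  shows integrable_lborel_prod_Basis:
      "integrable (lborel::'a measure) (\<lambda>\<xi>. \<Prod>b\<in>Basis. F b (\<xi> \<bullet> b))"
    and integral_lborel_prod_Basis:
      "(\<integral>\<xi>. (\<Prod>b\<in>Basis. F b (\<xi> \<bullet> b)) \<partial>(lborel::'a measure)) = (\<Prod>b\<in>Basis. \<integral>t. F b t \<partial>lborel)"
proof -
  interpret product_sigma_finite "\<lambda>_::'a. (lborel::real measure)" by standard
  let ?P = "\<Pi>\<^sub>M b\<in>(Basis::'a set). lborel"
  have T: "(\<lambda>f. \<Sum>b\<in>Basis. f b *\<^sub>R b) \<in> ?P \<rightarrow>\<^sub>M (borel::'a measure)"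
    by measurable
  have meas: "(\<lambda>\<xi>::'a. \<Prod>b\<in>Basis. F b (\<xi> \<bullet> b)) \<in> borel_measurable borel"
    using int by (intro borel_measurable_prod) (auto dest: borel_measurable_integrable)
  have "integrable ?P (\<lambda>f. \<Prod>b\<in>Basis. F b (f b))"
    by (rule product_integrable_prod) (auto intro: int)
  then show "integrable (lborel::'a measure) (\<lambda>\<xi>. \<Prod>b\<in>Basis. F b (\<xi> \<bullet> b))"
    by (subst lborel_eq, subst integrable_distr_eq[OF T meas])
       (simp add: inner_sum_Basis_scaleR cong: prod.cong)
  have "(\<integral>\<xi>. (\<Prod>b\<in>Basis. F b (\<xi> \<bullet> b)) \<partial>(lborel::'a measure)) =
      (\<integral>f. (\<Prod>b\<in>Basis. F b ((\<Sum>b'\<in>Basis. f b' *\<^sub>R b') \<bullet> b)) \<partial>?P)"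
    by (subst lborel_eq, rule integral_distr[OF T meas])
  also have "\<dots> = (\<integral>f. (\<Prod>b\<in>Basis. F b (f b)) \<partial>?P)"
    by (intro Bochner_Integration.integral_cong refl prod.cong) (simp_all add: inner_sum_Basis_scaleR)
  also have "\<dots> = (\<Prod>b\<in>Basis. \<integral>t. F b t \<partial>lborel)"
    by (rule product_integral_prod) (auto intro: int)
  finally show "(\<integral>\<xi>. (\<Prod>b\<in>Basis. F b (\<xi> \<bullet> b)) \<partial>(lborel::'a measure)) = (\<Prod>b\<in>Basis. \<integral>t. F b t \<partial>lborel)" .
qed

lemma cis_sum: "finite A \<Longrightarrow> cis (\<Sum>i\<in>A. f i) = (\<Prod>i\<in>A. cis (f i))"
  by (induction A rule: finite_induct) (auto simp: cis_mult[symmetric])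

lemma integrable_std_normal_density_cis:
  "integrable lborel (\<lambda>t. complex_of_real (std_normal_density t) * cis (t * a))"
proof (rule Bochner_Integration.integrable_bound)
  show "integrable lborel std_normal_density" by simp
  show "(\<lambda>t. complex_of_real (std_normal_density t) * cis (t * a)) \<in> borel_measurable lborel"
    unfolding measurable_lborel2 std_normal_density_def normal_density_def
    by (intro borel_measurable_continuous_onI continuous_intros) auto
qed (simp add: norm_mult)

lemma integral_std_normal_density_cis:
  "(\<integral>t. complex_of_real (std_normal_density t) * cis (t * a) \<partial>lborel) = exp (- (a\<^sup>2) / 2)"
proof -
  have "(\<integral>t. complex_of_real (std_normal_density t) * cis (t * a) \<partial>lborel) = char std_normal_distribution a"
    unfolding char_def
    by (subst integral_density) (auto simp: scaleR_conv_of_real cis_conv_exp mult.commute)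
  then show ?thesis
    by (simp add: char_std_normal_distribution)
qed

definition std_gaussian :: "'a::euclidean_space \<Rightarrow> real" where
  "std_gaussian u = (\<Prod>b\<in>Basis. std_normal_density (u \<bullet> b))"

lemma std_gaussian_nonneg: "std_gaussian u \<ge> 0"
  unfolding std_gaussian_def by (intro prod_nonneg) auto

lemma std_gaussian_le: "std_gaussian (u::'a::euclidean_space) \<le> (1 / sqrt (2 * pi)) ^ DIM('a)"
proof -
  have "std_gaussian u \<le> (\<Prod>b\<in>(Basis::'a set). 1 / sqrt (2 * pi))"
    unfolding std_gaussian_def std_normal_density_def
    by (intro prod_mono) (auto intro!: divide_right_mono)
  then show ?thesis by simp
qed

lemma continuous_on_std_gaussian: "continuous_on UNIV std_gaussian"
  unfolding std_gaussian_def std_normal_density_def by (intro continuous_intros) auto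

lemma integrable_std_gaussian: "integrable lborel std_gaussian"
  unfolding std_gaussian_def[abs_def] by (rule integrable_lborel_prod_Basis) simp

lemma integral_std_gaussian: "(\<integral>u. std_gaussian u \<partial>lborel) = 1"
  unfolding std_gaussian_def[abs_def] by (subst integral_lborel_prod_Basis) simp_all

lemma std_gaussian_cis_eq_prod:
  "complex_of_real (std_gaussian \<xi>) * cis (\<xi> \<bullet> v) =
     (\<Prod>b\<in>Basis. complex_of_real (std_normal_density (\<xi> \<bullet> b)) * cis ((\<xi> \<bullet> b) * (v \<bullet> b)))"
  by (simp add: std_gaussian_def prod.distrib euclidean_inner[of \<xi> v] cis_sum mult.commute inner_commute)

lemma integrable_std_gaussian_cis:
  "integrable lborel (\<lambda>\<xi>. complex_of_real (std_gaussian \<xi>) * cis (\<xi> \<bullet> v))"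
  unfolding std_gaussian_cis_eq_prod
  by (rule integrable_lborel_prod_Basis) (rule integrable_std_normal_density_cis)

lemma std_gaussian_eq_Fourier:
  "complex_of_real (std_gaussian (v::'a::euclidean_space)) =
     of_real ((1 / sqrt (2 * pi)) ^ DIM('a)) * (\<integral>\<xi>. complex_of_real (std_gaussian \<xi>) * cis (\<xi> \<bullet> v) \<partial>lborel)"
proof -
  have "std_gaussian v = (1 / sqrt (2 * pi)) ^ DIM('a) * (\<Prod>b\<in>(Basis::'a set). exp (- ((v \<bullet> b)\<^sup>2) / 2))"
    unfolding std_gaussian_def std_normal_density_def prod.distrib prod_constant by simp
  then show ?thesis
    unfolding std_gaussian_cis_eq_prod
    by (subst integral_lborel_prod_Basis)
       (simp_all add: integrable_std_normal_density_cis integral_std_normal_density_cis)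
qed

lemma nn_integral_lborel_affine:
  fixes F :: "'a::euclidean_space \<Rightarrow> ennreal"
  assumes c: "c \<noteq> 0" and [measurable]: "F \<in> borel_measurable borel"
  shows "(\<integral>\<^sup>+x. F x \<partial>lborel) = ennreal (\<bar>c\<bar> ^ DIM('a)) * (\<integral>\<^sup>+x. F (t + c *\<^sub>R x) \<partial>lborel)"
  by (subst lborel_affine[OF c, of t]) (simp add: nn_integral_density nn_integral_distr nn_integral_cmult)

lemma psi_scaled_nonneg: "(\<And>x. \<psi> x \<ge> 0) \<Longrightarrow> h > 0 \<Longrightarrow> psi_scaled \<psi> h x \<ge> 0"
  unfolding psi_scaled_def by simp

lemma continuous_on_psi_scaled:
  assumes "continuous_on UNIV \<psi>"
  shows "continuous_on UNIV (psi_scaled \<psi> h)"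
  unfolding psi_scaled_def[abs_def]
  by (intro continuous_intros continuous_on_compose2[OF assms]) auto

lemma nn_integral_psi_scaled:
  fixes G :: "'a::euclidean_space \<Rightarrow> real"
  assumes G: "G \<in> borel_measurable borel" and h: "h > 0"
  shows "(\<integral>\<^sup>+z. ennreal (psi_scaled G h (x - z)) \<partial>lborel) = (\<integral>\<^sup>+w. ennreal (G w) \<partial>lborel)"
proof -
  have [measurable]: "(\<lambda>z. ennreal (psi_scaled G h (x - z))) \<in> borel_measurable borel"
    using G unfolding psi_scaled_def by measurable
  have "(\<integral>\<^sup>+z. ennreal (psi_scaled G h (x - z)) \<partial>lborel) =
      ennreal (h ^ DIM('a)) * (\<integral>\<^sup>+w. ennreal (psi_scaled G h (x - (x + (- h) *\<^sub>R w))) \<partial>lborel)"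
    using h by (subst nn_integral_lborel_affine[of "- h" _ x]) simp_all
  also have "\<dots> = (\<integral>\<^sup>+w. ennreal (h ^ DIM('a)) * ennreal (psi_scaled G h (x - (x + (- h) *\<^sub>R w))) \<partial>lborel)"
    by (rule nn_integral_cmult[symmetric]) measurable
  also have "\<dots> = (\<integral>\<^sup>+w. ennreal (G w) \<partial>lborel)"
    using h by (intro nn_integral_cong) (simp add: psi_scaled_def ennreal_mult'[symmetric] field_simps)
  finally show ?thesis .
qed

lemma borel_measurable_pair_continuous_on:
  fixes f :: "'a::euclidean_space \<times> 'b::euclidean_space \<Rightarrow> 'c::topological_space"
  assumes "sets M = sets borel" "sets N = sets borel" "continuous_on UNIV f"
  shows "f \<in> borel_measurable (M \<Otimes>\<^sub>M N)"
proof -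
  have "sets (M \<Otimes>\<^sub>M N) = sets (borel \<Otimes>\<^sub>M borel :: ('a \<times> 'b) measure)"
    by (rule sets_pair_measure_cong) (simp_all add: assms)
  also have "\<dots> = sets borel" by (metis borel_prod)
  finally show ?thesis
    using borel_measurable_continuous_onI[OF assms(3)] measurable_cong_sets by blast
qed

lemma borel_measurable_convolution_integrand:
  fixes \<phi> g :: "'a::euclidean_space \<Rightarrow> real"
  assumes "sets M = sets borel" "continuous_on UNIV \<phi>" "continuous_on UNIV g"
  shows "(\<lambda>(y, z). ennreal (\<phi> z * g (z - y))) \<in> borel_measurable (M \<Otimes>\<^sub>M lborel)"
proof -
  have "continuous_on UNIV (\<lambda>p::'a \<times> 'a. \<phi> (snd p) * g (snd p - fst p))"
    by (intro continuous_intros continuous_on_compose2[OF assms(2)] continuous_on_compose2[OF assms(3)]) auto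
  then show ?thesis
    using measurable_compose[OF borel_measurable_pair_continuous_on[OF assms(1) sets_lborel] measurable_ennreal]
    by (simp add: case_prod_beta' o_def)
qed

lemma set_integrable_continuous_on_compact:
  fixes G :: "'a::euclidean_space \<Rightarrow> real"
  assumes M: "finite_measure M" "sets M = sets borel" and cpt: "compact \<Omega>" and G: "continuous_on \<Omega> G"
  shows "set_integrable M \<Omega> G"
proof -
  interpret finite_measure M by (rule M(1))
  obtain B where B: "B \<ge> 0" "\<And>x. x \<in> \<Omega> \<Longrightarrow> norm (G x) \<le> B"
    using continuous_on_compact_bound[OF cpt G] by metis
  have "\<Omega> \<in> sets borel" using cpt by (simp add: compact_imp_closed)
  then have "(\<lambda>x. indicator \<Omega> x *\<^sub>R G x) \<in> borel_measurable M"
    using borel_measurable_continuous_on_indicator[OF _ G] by (simp add: measurable_cong_sets[OF M(2) refl])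
  then show ?thesis
    unfolding set_integrable_def
    using B by (intro integrable_const_bound[where B=B]) (auto simp: indicator_def)
qed

lemma nn_integral_indicator_cong_measure:
  fixes F :: "'a::topological_space \<Rightarrow> ennreal"
  assumes M: "sets M = sets borel" and N: "sets N = sets borel" and \<Omega>: "\<Omega> \<in> sets borel"
    and agree: "\<And>A. A \<in> sets borel \<Longrightarrow> A \<subseteq> \<Omega> \<Longrightarrow> emeasure M A = emeasure N A"
    and F: "F \<in> borel_measurable borel"
  shows "(\<integral>\<^sup>+y. indicator \<Omega> y * F y \<partial>M) = (\<integral>\<^sup>+y. indicator \<Omega> y * F y \<partial>N)"
proof -
  have "density M (indicator \<Omega>) = density N (indicator \<Omega>)"
  proof (rule measure_eqI)
    show "sets (density M (indicator \<Omega>)) = sets (density N (indicator \<Omega>))"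
      using M N by simp
    fix A assume "A \<in> sets (density M (indicator \<Omega>))"
    then have A: "A \<in> sets borel" using M by simp
    have "emeasure (density M (indicator \<Omega>)) A = emeasure M (\<Omega> \<inter> A)"
      using A \<Omega> M by (intro emeasure_restricted) simp_all
    also have "\<dots> = emeasure N (\<Omega> \<inter> A)"
      using A \<Omega> by (intro agree) auto
    also have "\<dots> = emeasure (density N (indicator \<Omega>)) A"
      using A \<Omega> N by (intro emeasure_restricted[symmetric]) simp_all
    finally show "emeasure (density M (indicator \<Omega>)) A = emeasure (density N (indicator \<Omega>)) A" .
  qed
  moreover have "(\<integral>\<^sup>+y. indicator \<Omega> y * F y \<partial>L) = (\<integral>\<^sup>+y. F y \<partial>density L (indicator \<Omega>))"
    if "sets L = sets borel" for L :: "'a measure"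
    using that \<Omega> F by (subst nn_integral_density) (simp_all add: measurable_cong_sets[OF that refl])
  ultimately show ?thesis using M N by simp
qed

section \<open>Measures with integrable Fourier transform\<close>

lemma integral_psi_scaled_std_gaussian_eq_Fourier:
  fixes M :: "'a::euclidean_space measure"
  assumes M: "finite_measure M" "sets M = sets borel" and s: "s > 0"
  shows "complex_of_real (\<integral>y. psi_scaled std_gaussian s (z - y) \<partial>M) =
    of_real ((inverse s / sqrt (2 * pi)) ^ DIM('a)) *
    (\<integral>\<xi>. complex_of_real (std_gaussian \<xi>) * cis (\<xi> \<bullet> (inverse s *\<^sub>R z)) *
          fourier_measure M (inverse (2 * pi * s) *\<^sub>R \<xi>) \<partial>lborel)"
proof -
  interpret finite_measure M by (rule M(1))
  interpret P: pair_sigma_finite M "lborel :: 'a measure" by unfold_locales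
  define \<Phi> where "\<Phi> y \<xi> = complex_of_real (std_gaussian \<xi>) * cis (\<xi> \<bullet> (inverse s *\<^sub>R (z - y)))" for y \<xi> :: 'a
  have int\<Phi>: "integrable (M \<Otimes>\<^sub>M lborel) (case_prod \<Phi>)"
  proof (rule P.Fubini_integrable)
    have "continuous_on UNIV (\<lambda>p::'a \<times> 'a. \<Phi> (fst p) (snd p))"
      unfolding \<Phi>_def
      by (intro continuous_intros continuous_on_compose2[OF continuous_on_std_gaussian]) auto
    then show "case_prod \<Phi> \<in> borel_measurable (M \<Otimes>\<^sub>M lborel)"
      using borel_measurable_pair_continuous_on[OF M(2) sets_lborel] by (simp add: case_prod_beta')
    show "integrable M (\<lambda>y. \<integral>\<xi>. norm (case_prod \<Phi> (y, \<xi>)) \<partial>lborel)"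
      by (simp add: \<Phi>_def norm_mult std_gaussian_nonneg integral_std_gaussian)
    show "AE y in M. integrable lborel (\<lambda>\<xi>. case_prod \<Phi> (y, \<xi>))"
      unfolding \<Phi>_def by (simp only: case_prod_conv integrable_std_gaussian_cis AE_I2)
  qed
  have split_phase: "\<Phi> y \<xi> = complex_of_real (std_gaussian \<xi>) * cis (\<xi> \<bullet> (inverse s *\<^sub>R z)) *
      cis (- 2 * pi * (y \<bullet> (inverse (2 * pi * s) *\<^sub>R \<xi>)))" for y \<xi>
  proof -
    have "\<xi> \<bullet> (inverse s *\<^sub>R (z - y)) = \<xi> \<bullet> (inverse s *\<^sub>R z) + - 2 * pi * (y \<bullet> (inverse (2 * pi * s) *\<^sub>R \<xi>))"
      using s by (simp add: inner_diff_right inner_commute field_simps)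
    then show ?thesis by (simp only: \<Phi>_def mult.assoc cis_mult)
  qed
  have pointwise: "complex_of_real (psi_scaled std_gaussian s (z - y)) =
      of_real ((inverse s / sqrt (2 * pi)) ^ DIM('a)) * (\<integral>\<xi>. \<Phi> y \<xi> \<partial>lborel)" for y
  proof -
    have "(inverse s / sqrt (2 * pi)) ^ DIM('a) = inverse (s ^ DIM('a)) * (1 / sqrt (2 * pi)) ^ DIM('a)"
      by (simp add: power_mult_distrib power_inverse divide_inverse)
    then show ?thesis
      unfolding psi_scaled_def of_real_mult
      by (subst std_gaussian_eq_Fourier) (simp add: \<Phi>_def[abs_def])
  qed
  have "complex_of_real (\<integral>y. psi_scaled std_gaussian s (z - y) \<partial>M) =
      (\<integral>y. complex_of_real (psi_scaled std_gaussian s (z - y)) \<partial>M)"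
    by simp
  also have "\<dots> = of_real ((inverse s / sqrt (2 * pi)) ^ DIM('a)) * (\<integral>y. (\<integral>\<xi>. \<Phi> y \<xi> \<partial>lborel) \<partial>M)"
    unfolding pointwise by simp
  also have "(\<integral>y. (\<integral>\<xi>. \<Phi> y \<xi> \<partial>lborel) \<partial>M) = (\<integral>\<xi>. (\<integral>y. \<Phi> y \<xi> \<partial>M) \<partial>lborel)"
    using P.Fubini_integral[OF int\<Phi>] by simp
  finally show ?thesis
    by (simp add: split_phase fourier_measure_def)
qed

lemma abs_integral_psi_scaled_std_gaussian_le_Fourier_L1:
  fixes M :: "'a::euclidean_space measure"
  assumes M: "finite_measure M" "sets M = sets borel"
    and fint: "integrable lborel (fourier_measure M)" and s: "s > 0"
  shows "\<bar>\<integral>y. psi_scaled std_gaussian s (z - y) \<partial>M\<bar> \<le> (\<integral>\<xi>. norm (fourier_measure M \<xi>) \<partial>lborel)"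
proof -
  define c where "c = 1 / sqrt (2 * pi)"
  define d where "d = DIM('a)"
  define K where "K = (\<integral>\<xi>. norm (fourier_measure M \<xi>) \<partial>lborel)"
  define G where "G \<xi> = complex_of_real (std_gaussian \<xi>) * cis (\<xi> \<bullet> (inverse s *\<^sub>R z)) *
    fourier_measure M (inverse (2 * pi * s) *\<^sub>R \<xi>)" for \<xi>
  have [measurable]: "fourier_measure M \<in> borel_measurable borel"
    using borel_measurable_integrable[OF fint] by simp
  have phase_cont: "continuous_on UNIV (\<lambda>\<xi>. complex_of_real (std_gaussian \<xi>) * cis (\<xi> \<bullet> (inverse s *\<^sub>R z)))"
    by (intro continuous_intros continuous_on_compose2[OF continuous_on_std_gaussian]) auto
  have G_meas: "G \<in> borel_measurable lborel"
    unfolding G_def measurable_lborel2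
    by (rule borel_measurable_times[OF borel_measurable_continuous_onI[OF phase_cont]]) measurable
  have "(\<integral>\<^sup>+\<xi>. norm (G \<xi>) \<partial>lborel) \<le> (\<integral>\<^sup>+\<xi>. c ^ d * norm (fourier_measure M (inverse (2 * pi * s) *\<^sub>R \<xi>)) \<partial>lborel)"
    by (intro nn_integral_mono ennreal_leI)
       (simp add: G_def norm_mult std_gaussian_nonneg mult_right_mono std_gaussian_le c_def d_def)
  also have "\<dots> = ennreal (c ^ d) * (\<integral>\<^sup>+\<xi>. norm (fourier_measure M (inverse (2 * pi * s) *\<^sub>R \<xi>)) \<partial>lborel)"
    by (subst ennreal_mult') (simp_all add: c_def nn_integral_cmult)
  also have "(\<integral>\<^sup>+\<xi>. norm (fourier_measure M (inverse (2 * pi * s) *\<^sub>R \<xi>)) \<partial>lborel) =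
      ennreal ((2 * pi * s) ^ d) * (\<integral>\<^sup>+\<xi>. norm (fourier_measure M \<xi>) \<partial>lborel)"
    using nn_integral_lborel_affine[of "2 * pi * s" "\<lambda>\<xi>. ennreal (norm (fourier_measure M (inverse (2 * pi * s) *\<^sub>R \<xi>)))" 0] s
    by (simp add: d_def field_simps)
  also have "(\<integral>\<^sup>+\<xi>. norm (fourier_measure M \<xi>) \<partial>lborel) = K"
    unfolding K_def by (rule nn_integral_eq_integral) (simp_all add: fint integrable_norm)
  finally have G_bound: "(\<integral>\<^sup>+\<xi>. norm (G \<xi>) \<partial>lborel) \<le> ennreal (c ^ d * (2 * pi * s) ^ d * K)"
    using s by (simp add: ennreal_mult'[symmetric] K_def c_def mult.assoc)
  have "\<bar>\<integral>y. psi_scaled std_gaussian s (z - y) \<partial>M\<bar> = norm (complex_of_real (\<integral>y. psi_scaled std_gaussian s (z - y) \<partial>M))"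
    by simp
  also have "\<dots> = (inverse s * c) ^ d * norm (\<integral>\<xi>. G \<xi> \<partial>lborel)"
    unfolding integral_psi_scaled_std_gaussian_eq_Fourier[OF M s] G_def[abs_def, symmetric]
    using s by (simp add: norm_mult norm_power norm_inverse c_def d_def divide_inverse)
  also have "\<dots> \<le> (inverse s * c) ^ d * (c ^ d * (2 * pi * s) ^ d * K)"
  proof (rule mult_left_mono)
    have "integrable lborel G"
      using G_bound by (intro integrableI_bounded G_meas) (auto simp: less_top[symmetric] top_unique)
    then have "ennreal (norm (\<integral>\<xi>. G \<xi> \<partial>lborel)) \<le> ennreal (c ^ d * (2 * pi * s) ^ d * K)"
      using integral_norm_bound_ennreal G_bound order_trans by blast
    then show "norm (\<integral>\<xi>. G \<xi> \<partial>lborel) \<le> c ^ d * (2 * pi * s) ^ d * K"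
      using s by (subst (asm) ennreal_le_iff) (auto simp: c_def K_def)
  qed (use s in \<open>simp add: c_def\<close>)
  also have "\<dots> = (inverse s * c * c * (2 * pi * s)) ^ d * K"
    by (simp add: power_mult_distrib)
  also have "inverse s * c * c * (2 * pi * s) = 1"
    using s by (simp add: c_def)
  finally show ?thesis by (simp add: K_def)
qed

lemma nn_integral_psi_scaled_std_gaussian_le_Fourier_L1:
  fixes M :: "'a::euclidean_space measure"
  assumes M: "finite_measure M" "sets M = sets borel"
    and fint: "integrable lborel (fourier_measure M)" and s: "s > 0"
  shows "(\<integral>\<^sup>+y. psi_scaled std_gaussian s (z - y) \<partial>M) \<le> (\<integral>\<xi>. norm (fourier_measure M \<xi>) \<partial>lborel)"
proof -
  interpret finite_measure M by (rule M(1))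
  have "continuous_on UNIV (\<lambda>y. psi_scaled std_gaussian s (z - y))"
    by (intro continuous_on_compose2[OF continuous_on_psi_scaled[OF continuous_on_std_gaussian]]
        continuous_intros) auto
  then have "integrable M (\<lambda>y. psi_scaled std_gaussian s (z - y))"
    using s borel_measurable_continuous_onI
    by (intro integrable_const_bound[where B="inverse (s ^ DIM('a)) * (1 / sqrt (2 * pi)) ^ DIM('a)"])
       (simp_all add: psi_scaled_def std_gaussian_nonneg std_gaussian_le measurable_cong_sets[OF M(2)])
  then have "(\<integral>\<^sup>+y. psi_scaled std_gaussian s (z - y) \<partial>M) = ennreal (\<integral>y. psi_scaled std_gaussian s (z - y) \<partial>M)"
    using s by (intro nn_integral_eq_integral) (simp_all add: psi_scaled_nonneg std_gaussian_nonneg)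
  then show ?thesis
    using abs_integral_psi_scaled_std_gaussian_le_Fourier_L1[OF M fint s, of z] by (simp add: ennreal_leI)
qed

lemma tendsto_integral_std_gaussian_mollifier:
  fixes \<phi> :: "'a::euclidean_space \<Rightarrow> real"
  assumes cont: "continuous_on UNIV \<phi>" and bnd: "\<And>x. \<bar>\<phi> x\<bar> \<le> B"
  shows "(\<lambda>n. \<integral>w. \<phi> (y + (1 / real (Suc n)) *\<^sub>R w) * std_gaussian w \<partial>lborel) \<longlonglongrightarrow> \<phi> y"
proof -
  have meas: "(\<lambda>w. \<phi> (y + a *\<^sub>R w) * std_gaussian w) \<in> borel_measurable lborel" for a
  proof -
    have "continuous_on UNIV (\<lambda>w. \<phi> (y + a *\<^sub>R w) * std_gaussian w)"
      by (intro continuous_intros continuous_on_compose2[OF cont] continuous_on_std_gaussian) auto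
    then show ?thesis using borel_measurable_continuous_onI by simp
  qed
  have "(\<lambda>n. \<integral>w. \<phi> (y + (1 / real (Suc n)) *\<^sub>R w) * std_gaussian w \<partial>lborel) \<longlonglongrightarrow>
      (\<integral>w. \<phi> (y + 0 *\<^sub>R w) * std_gaussian w \<partial>lborel)"
  proof (rule integral_dominated_convergence[where w="\<lambda>w. B * std_gaussian w"])
    show "integrable lborel (\<lambda>w. B * std_gaussian w)"
      by (rule integrable_mult_right[OF integrable_std_gaussian])
    show "AE w in lborel. (\<lambda>n. \<phi> (y + (1 / real (Suc n)) *\<^sub>R w) * std_gaussian w) \<longlonglongrightarrow>
        \<phi> (y + 0 *\<^sub>R w) * std_gaussian w"
    proof (rule AE_I2)
      fix w :: 'a
      have "(\<lambda>n. y + (1 / real (Suc n)) *\<^sub>R w) \<longlonglongrightarrow> y + 0 *\<^sub>R w"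
        using LIMSEQ_inverse_real_of_nat by (intro tendsto_intros) (simp add: inverse_eq_divide)
      then have "(\<lambda>n. \<phi> (y + (1 / real (Suc n)) *\<^sub>R w)) \<longlonglongrightarrow> \<phi> (y + 0 *\<^sub>R w)"
        by (intro continuous_on_tendsto_compose[OF cont]) auto
      then show "(\<lambda>n. \<phi> (y + (1 / real (Suc n)) *\<^sub>R w) * std_gaussian w) \<longlonglongrightarrow> \<phi> (y + 0 *\<^sub>R w) * std_gaussian w"
        by (intro tendsto_intros)
    qed
    show "AE w in lborel. norm (\<phi> (y + (1 / real (Suc n)) *\<^sub>R w) * std_gaussian w) \<le> B * std_gaussian w" for n
      using bnd by (intro AE_I2) (simp add: abs_mult std_gaussian_nonneg mult_right_mono)
  qed (use meas[of 0] meas in simp_all)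
  then show ?thesis by (simp add: integral_std_gaussian)
qed

lemma nn_integral_psi_scaled_std_gaussian_mollifier:
  fixes \<phi> :: "'a::euclidean_space \<Rightarrow> real"
  assumes cont: "continuous_on UNIV \<phi>" and nn: "\<And>x. 0 \<le> \<phi> x" and bnd: "\<And>x. \<phi> x \<le> B"
    and s: "s > 0"
  shows "(\<integral>\<^sup>+z. ennreal (\<phi> z * psi_scaled std_gaussian s (z - y)) \<partial>lborel) =
    ennreal (\<integral>w. \<phi> (y + s *\<^sub>R w) * std_gaussian w \<partial>lborel)"
proof -
  have [measurable]: "\<phi> \<in> borel_measurable borel" "psi_scaled std_gaussian s \<in> borel_measurable borel"
    by (intro borel_measurable_continuous_onI cont continuous_on_psi_scaled continuous_on_std_gaussian)+
  have shifted_cont: "continuous_on UNIV (\<lambda>w. \<phi> (y + s *\<^sub>R w) * std_gaussian w)"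
    by (intro continuous_intros continuous_on_compose2[OF cont] continuous_on_std_gaussian) auto
  have "(\<integral>\<^sup>+z. ennreal (\<phi> z * psi_scaled std_gaussian s (z - y)) \<partial>lborel) =
      ennreal (s ^ DIM('a)) * (\<integral>\<^sup>+w. ennreal (\<phi> (y + s *\<^sub>R w) * psi_scaled std_gaussian s (y + s *\<^sub>R w - y)) \<partial>lborel)"
    using s by (subst nn_integral_lborel_affine[of s _ y]) simp_all
  also have "\<dots> = (\<integral>\<^sup>+w. ennreal (s ^ DIM('a)) * ennreal (\<phi> (y + s *\<^sub>R w) * psi_scaled std_gaussian s (y + s *\<^sub>R w - y)) \<partial>lborel)"
    by (rule nn_integral_cmult[symmetric]) measurable
  also have "\<dots> = (\<integral>\<^sup>+w. ennreal (\<phi> (y + s *\<^sub>R w) * std_gaussian w) \<partial>lborel)"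
    using s nn by (intro nn_integral_cong) (simp add: psi_scaled_def ennreal_mult'[symmetric] std_gaussian_nonneg)
  also have "\<dots> = ennreal (\<integral>w. \<phi> (y + s *\<^sub>R w) * std_gaussian w \<partial>lborel)"
  proof (rule nn_integral_eq_integral)
    show "integrable lborel (\<lambda>w. \<phi> (y + s *\<^sub>R w) * std_gaussian w)"
    proof (rule Bochner_Integration.integrable_bound[OF integrable_mult_right[OF integrable_std_gaussian, of B]])
      show "(\<lambda>w. \<phi> (y + s *\<^sub>R w) * std_gaussian w) \<in> borel_measurable lborel"
        using borel_measurable_continuous_onI[OF shifted_cont] by simp
      show "AE w in lborel. norm (\<phi> (y + s *\<^sub>R w) * std_gaussian w) \<le> norm (B * std_gaussian w)"
        using nn bnd by (intro AE_I2) (auto simp: abs_mult std_gaussian_nonneg intro!: mult_right_mono order_trans[OF bnd abs_ge_self])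
    qed
  qed (simp add: nn std_gaussian_nonneg)
  finally show ?thesis .
qed

lemma nn_integral_convolution_psi_scaled_std_gaussian_le:
  fixes M :: "'a::euclidean_space measure" and \<phi> :: "'a \<Rightarrow> real"
  assumes M: "finite_measure M" "sets M = sets borel"
    and fint: "integrable lborel (fourier_measure M)" and s: "s > 0"
    and cont: "continuous_on UNIV \<phi>" and nn: "\<And>x. 0 \<le> \<phi> x"
  shows "(\<integral>\<^sup>+y. (\<integral>\<^sup>+z. ennreal (\<phi> z * psi_scaled std_gaussian s (z - y)) \<partial>lborel) \<partial>M) \<le>
    ennreal (\<integral>\<xi>. norm (fourier_measure M \<xi>) \<partial>lborel) * (\<integral>\<^sup>+z. \<phi> z \<partial>lborel)"
proof -
  interpret finite_measure M by (rule M(1))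
  interpret P: pair_sigma_finite M "lborel :: 'a measure" by unfold_locales
  define K where "K = (\<integral>\<xi>. norm (fourier_measure M \<xi>) \<partial>lborel)"
  have g_cont: "continuous_on UNIV (\<lambda>y. psi_scaled std_gaussian s (z - y))" for z
    by (intro continuous_on_compose2[OF continuous_on_psi_scaled[OF continuous_on_std_gaussian]] continuous_intros) auto
  have "(\<lambda>(y, z). ennreal (\<phi> z * psi_scaled std_gaussian s (z - y))) \<in> borel_measurable (M \<Otimes>\<^sub>M lborel)"
    by (intro borel_measurable_convolution_integrand[OF M(2) cont]
        continuous_on_psi_scaled continuous_on_std_gaussian)
  then have "(\<integral>\<^sup>+y. (\<integral>\<^sup>+z. ennreal (\<phi> z * psi_scaled std_gaussian s (z - y)) \<partial>lborel) \<partial>M) =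
      (\<integral>\<^sup>+z. (\<integral>\<^sup>+y. ennreal (\<phi> z) * ennreal (psi_scaled std_gaussian s (z - y)) \<partial>M) \<partial>lborel)"
    using s nn by (subst P.Fubini') (simp_all add: ennreal_mult psi_scaled_nonneg std_gaussian_nonneg)
  also have "\<dots> = (\<integral>\<^sup>+z. ennreal (\<phi> z) * (\<integral>\<^sup>+y. psi_scaled std_gaussian s (z - y) \<partial>M) \<partial>lborel)"
    using borel_measurable_continuous_onI[OF g_cont]
    by (intro nn_integral_cong nn_integral_cmult measurable_compose[OF _ measurable_ennreal])
       (simp add: measurable_cong_sets[OF M(2) refl])
  also have "\<dots> \<le> (\<integral>\<^sup>+z. ennreal (\<phi> z) * ennreal K \<partial>lborel)"
    unfolding K_def
    by (intro nn_integral_mono mult_left_mono nn_integral_psi_scaled_std_gaussian_le_Fourier_L1[OF M fint s]) simp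
  also have "\<dots> = ennreal K * (\<integral>\<^sup>+z. \<phi> z \<partial>lborel)"
    using measurable_compose[OF borel_measurable_continuous_onI[OF cont] measurable_ennreal]
    by (subst nn_integral_multc) (simp_all add: mult.commute)
  finally show ?thesis unfolding K_def .
qed

text \<open>Mollifying with Gaussians of shrinking width and applying Fatou's lemma shows that \<open>M\<close>
  has a density bounded by the \<open>L\<^sup>1\<close> norm of its Fourier transform.\<close>

lemma nn_integral_le_Fourier_L1_mult_lborel:
  fixes M :: "'a::euclidean_space measure" and \<phi> :: "'a \<Rightarrow> real"
  assumes M: "finite_measure M" "sets M = sets borel"
    and fint: "integrable lborel (fourier_measure M)"
    and cont: "continuous_on UNIV \<phi>" and nn: "\<And>x. 0 \<le> \<phi> x" and bnd: "\<And>x. \<phi> x \<le> B"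
  shows "(\<integral>\<^sup>+y. \<phi> y \<partial>M) \<le> ennreal (\<integral>\<xi>. norm (fourier_measure M \<xi>) \<partial>lborel) * (\<integral>\<^sup>+z. \<phi> z \<partial>lborel)"
proof -
  define s where "s n = 1 / real (Suc n)" for n
  have s: "s n > 0" for n by (simp add: s_def)
  define A where "A n y = (\<integral>\<^sup>+z. ennreal (\<phi> z * psi_scaled std_gaussian (s n) (z - y)) \<partial>lborel)" for n y
  have A_meas: "A n \<in> borel_measurable M" for n
    unfolding A_def
    by (intro lborel.borel_measurable_nn_integral borel_measurable_convolution_integrand[OF M(2) cont]
        continuous_on_psi_scaled continuous_on_std_gaussian)
  have "(\<lambda>n. ennreal (\<integral>w. \<phi> (y + s n *\<^sub>R w) * std_gaussian w \<partial>lborel)) \<longlonglongrightarrow> ennreal (\<phi> y)" for y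
    unfolding s_def using nn bnd
    by (intro tendsto_ennrealI tendsto_integral_std_gaussian_mollifier[OF cont, where B=B]) (simp add: abs_of_nonneg)
  then have A_lim: "ennreal (\<phi> y) = liminf (\<lambda>n. A n y)" for y
    unfolding A_def nn_integral_psi_scaled_std_gaussian_mollifier[OF cont nn bnd s]
    by (simp add: lim_imp_Liminf[symmetric])
  have "(\<integral>\<^sup>+y. \<phi> y \<partial>M) = (\<integral>\<^sup>+y. liminf (\<lambda>n. A n y) \<partial>M)"
    by (simp add: A_lim)
  also have "\<dots> \<le> liminf (\<lambda>n. \<integral>\<^sup>+y. A n y \<partial>M)"
    by (rule nn_integral_liminf[OF A_meas])
  also have "\<dots> \<le> liminf (\<lambda>n. ennreal (\<integral>\<xi>. norm (fourier_measure M \<xi>) \<partial>lborel) * (\<integral>\<^sup>+z. \<phi> z \<partial>lborel))"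
    unfolding A_def
    by (intro Liminf_mono always_eventually allI nn_integral_convolution_psi_scaled_std_gaussian_le[OF M fint s cont nn])
  finally show ?thesis
    by (simp add: Liminf_const)
qed

section \<open>Modulus of continuity\<close>

lemma modulus_bdd_above:
  fixes f :: "'a::euclidean_space \<Rightarrow> real"
  assumes "compact \<Omega>" "continuous_on \<Omega> f"
  shows "bdd_above {\<bar>f x - f y\<bar> | x y. x \<in> \<Omega> \<and> y \<in> \<Omega> \<and> norm (x - y) \<le> t}"
proof -
  obtain B where B: "\<And>x. x \<in> \<Omega> \<Longrightarrow> norm (f x) \<le> B"
    using continuous_on_compact_bound[OF assms] by blast
  show ?thesis
  proof (rule bdd_aboveI[where M="2 * B"])
    fix z assume "z \<in> {\<bar>f x - f y\<bar> | x y. x \<in> \<Omega> \<and> y \<in> \<Omega> \<and> norm (x - y) \<le> t}"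
    then obtain x y where "z = \<bar>f x - f y\<bar>" "x \<in> \<Omega>" "y \<in> \<Omega>" by blast
    with B[of x] B[of y] show "z \<le> 2 * B" by auto
  qed
qed

lemma abs_diff_le_modulus:
  fixes f :: "'a::euclidean_space \<Rightarrow> real"
  assumes "compact \<Omega>" "continuous_on \<Omega> f" "x \<in> \<Omega>" "y \<in> \<Omega>" "norm (x - y) \<le> t"
  shows "\<bar>f x - f y\<bar> \<le> modulus \<Omega> f t"
  unfolding modulus_def
  by (rule cSup_upper[OF _ modulus_bdd_above[OF assms(1,2)]]) (use assms in blast)

lemma modulus_nonneg:
  fixes f :: "'a::euclidean_space \<Rightarrow> real"
  assumes "compact \<Omega>" "continuous_on \<Omega> f" "x \<in> \<Omega>" "t \<ge> 0"
  shows "modulus \<Omega> f t \<ge> 0"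
  using abs_diff_le_modulus[OF assms(1,2,3,3)] assms(4) by simp

text \<open>On a convex set, split the segment from \<open>x\<close> to \<open>y\<close> into \<open>\<lceil>|x - y| / h\<rceil>\<close> pieces of length at most \<open>h\<close>.\<close>

lemma abs_diff_le_modulus_convex:
  fixes f :: "'a::euclidean_space \<Rightarrow> real"
  assumes cpt: "compact \<Omega>" and cvx: "convex \<Omega>" and cont: "continuous_on \<Omega> f"
    and h: "h > 0" and x: "x \<in> \<Omega>" and y: "y \<in> \<Omega>"
  shows "\<bar>f x - f y\<bar> \<le> modulus \<Omega> f h * (1 + norm (x - y) / h)"
proof -
  define n where "n = nat \<lceil>norm (x - y) / h\<rceil>"
  have w0: "modulus \<Omega> f h \<ge> 0" using modulus_nonneg[OF cpt cont x] h by simp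
  show ?thesis
  proof (cases "n = 0")
    case True
    then have "x = y" using h by (simp add: n_def divide_le_0_iff)
    then show ?thesis using w0 by simp
  next
    case False
    then have npos: "n > 0" by simp
    have n_ge: "real n \<ge> norm (x - y) / h" unfolding n_def by (rule real_nat_ceiling_ge)
    have n_le: "real n \<le> 1 + norm (x - y) / h"
      using h ceiling_correct[of "norm (x - y) / h"] by (simp add: n_def of_nat_nat)
    define p where "p k = x + (real k / real n) *\<^sub>R (y - x)" for k
    have p_in: "p k \<in> \<Omega>" if "k \<le> n" for k
    proof -
      have "p k = (1 - real k / real n) *\<^sub>R x + (real k / real n) *\<^sub>R y"
        unfolding p_def by (simp add: algebra_simps)
      moreover have "0 \<le> real k / real n" "real k / real n \<le> 1" using that npos by auto
      ultimately show ?thesis using cvx x y unfolding convex_alt by (metis add.commute)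
    qed
    have p_step: "norm (p (Suc k) - p k) \<le> h" for k
    proof -
      have "p (Suc k) - p k = (1 / real n) *\<^sub>R (y - x)"
        unfolding p_def by (simp add: diff_divide_distrib[symmetric] scaleR_diff_left[symmetric])
      then have "norm (p (Suc k) - p k) = norm (x - y) / real n"
        by (simp add: norm_minus_commute)
      also have "\<dots> \<le> h" using n_ge npos h by (simp add: divide_le_eq mult.commute)
      finally show ?thesis .
    qed
    have "p 0 = x" "p n = y" using npos by (simp_all add: p_def)
    then have "f y - f x = (\<Sum>k<n. f (p (Suc k)) - f (p k))"
      by (subst sum_lessThan_telescope) simp
    then have "\<bar>f x - f y\<bar> \<le> (\<Sum>k<n. \<bar>f (p (Suc k)) - f (p k)\<bar>)"
      by (metis abs_minus_commute sum_abs)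
    also have "\<dots> \<le> (\<Sum>k<n. modulus \<Omega> f h)"
      by (intro sum_mono abs_diff_le_modulus[OF cpt cont] p_in p_step) auto
    also have "\<dots> \<le> (1 + norm (x - y) / h) * modulus \<Omega> f h"
      using mult_right_mono[OF n_le w0] by simp
    finally show ?thesis by (simp add: mult.commute)
  qed
qed

section \<open>The kernel estimator\<close>

lemma psi_scaled_mass_ge:
  fixes \<mu> :: "'a::euclidean_space measure" and \<psi> :: "'a \<Rightarrow> real"
  assumes \<mu>: "finite_measure \<mu>" "sets \<mu> = sets borel" and cpt: "compact \<Omega>"
    and \<psi>: "continuous_on UNIV \<psi>" "\<And>x. \<psi> x \<ge> 0" "\<And>x. norm x \<le> 1 \<Longrightarrow> \<psi> x \<ge> C\<psi>" "C\<psi> \<ge> 0"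
    and ball: "C1 * measure lebesgue (ball x h) \<le> measure \<mu> (\<Omega> \<inter> ball x h)" and h: "h > 0"
  shows "C\<psi> * C1 * measure lebesgue (ball (0::'a) 1) \<le> (LINT t:\<Omega>|\<mu>. psi_scaled \<psi> h (x - t))"
proof -
  interpret finite_measure \<mu> by (rule \<mu>(1))
  define c where "c = inverse (h ^ DIM('a)) * C\<psi>"
  have c: "c \<ge> 0" unfolding c_def using h \<psi>(4) by simp
  have \<Omega>_ball: "\<Omega> \<inter> ball x h \<in> sets \<mu>"
    using cpt \<mu>(2) by (simp add: compact_imp_closed)
  have lower: "indicator (\<Omega> \<inter> ball x h) t * c \<le> indicator \<Omega> t * psi_scaled \<psi> h (x - t)" for t
  proof (cases "t \<in> \<Omega> \<inter> ball x h")
    case True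
    then have "norm (inverse h *\<^sub>R (x - t)) \<le> 1"
      using h by (simp add: dist_norm inverse_eq_divide)
    then have "c \<le> psi_scaled \<psi> h (x - t)"
      unfolding c_def psi_scaled_def using h \<psi>(3) by (intro mult_left_mono) simp_all
    then show ?thesis using True by simp
  qed (use h \<psi>(2) in \<open>auto simp: indicator_def psi_scaled_nonneg\<close>)
  have "measure \<mu> (\<Omega> \<inter> ball x h) * c = (\<integral>t. indicator (\<Omega> \<inter> ball x h) t * c \<partial>\<mu>)"
    using \<Omega>_ball by simp
  also have "\<dots> \<le> (LINT t:\<Omega>|\<mu>. psi_scaled \<psi> h (x - t))"
    unfolding set_lebesgue_integral_def real_scaleR_def
  proof (rule integral_mono[OF _ _ lower])
    show "integrable \<mu> (\<lambda>t. indicator (\<Omega> \<inter> ball x h) t * c)"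
      using \<Omega>_ball by (intro integrable_mult_left integrable_real_indicator) (simp_all add: less_top[symmetric])
    have "continuous_on \<Omega> (\<lambda>t. psi_scaled \<psi> h (x - t))"
      by (intro continuous_on_compose2[OF continuous_on_psi_scaled[OF \<psi>(1)]] continuous_intros) auto
    then show "integrable \<mu> (\<lambda>t. indicator \<Omega> t * psi_scaled \<psi> h (x - t))"
      using set_integrable_continuous_on_compact[OF \<mu> cpt] unfolding set_integrable_def by simp
  qed
  finally have "measure \<mu> (\<Omega> \<inter> ball x h) * c \<le> (LINT t:\<Omega>|\<mu>. psi_scaled \<psi> h (x - t))" .
  moreover have "C1 * measure lebesgue (ball x h) * c = C\<psi> * C1 * measure lebesgue (ball (0::'a) 1)"
    using content_ball_conv_unit_ball[of h x] h unfolding c_def by (simp add: field_simps)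
  ultimately show ?thesis
    using mult_right_mono[OF ball c] by linarith
qed

lemma abs_set_integral_weighted_diff_le_modulus:
  fixes \<mu> :: "'a::euclidean_space measure" and f P :: "'a \<Rightarrow> real"
  assumes \<mu>: "finite_measure \<mu>" "sets \<mu> = sets borel"
    and cpt: "compact \<Omega>" and cvx: "convex \<Omega>" and f: "continuous_on \<Omega> f"
    and P: "continuous_on \<Omega> P" "\<And>y. y \<in> \<Omega> \<Longrightarrow> P y \<ge> 0" and h: "h > 0" and x: "x \<in> \<Omega>"
  shows "\<bar>LINT y:\<Omega>|\<mu>. (f x - f y) * P y\<bar> \<le>
    modulus \<Omega> f h * ((LINT y:\<Omega>|\<mu>. P y) + (LINT y:\<Omega>|\<mu>. norm (x - y) / h * P y))"
proof -
  define w where "w = modulus \<Omega> f h"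
  have int: "set_integrable \<mu> \<Omega> g" if "continuous_on \<Omega> g" for g :: "'a \<Rightarrow> real"
    by (rule set_integrable_continuous_on_compact[OF \<mu> cpt that])
  have "\<bar>LINT y:\<Omega>|\<mu>. (f x - f y) * P y\<bar> \<le> (LINT y:\<Omega>|\<mu>. \<bar>(f x - f y) * P y\<bar>)"
    using set_integral_norm_bound[OF int] P(1) f by (simp add: continuous_intros)
  also have "\<dots> \<le> (LINT y:\<Omega>|\<mu>. w * P y + w * (norm (x - y) / h * P y))"
  proof (rule set_integral_mono)
    show "set_integrable \<mu> \<Omega> (\<lambda>y. \<bar>(f x - f y) * P y\<bar>)"
      "set_integrable \<mu> \<Omega> (\<lambda>y. w * P y + w * (norm (x - y) / h * P y))"
      using P(1) f h by (intro int continuous_intros; simp)+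
    fix y assume y: "y \<in> \<Omega>"
    then have "\<bar>f x - f y\<bar> * P y \<le> w * (1 + norm (x - y) / h) * P y"
      unfolding w_def by (intro mult_right_mono abs_diff_le_modulus_convex[OF cpt cvx f h x] P(2))
    then show "\<bar>(f x - f y) * P y\<bar> \<le> w * P y + w * (norm (x - y) / h * P y)"
      using P(2)[OF y] by (simp add: abs_mult distrib_left distrib_right)
  qed
  also have "\<dots> = w * ((LINT y:\<Omega>|\<mu>. P y) + (LINT y:\<Omega>|\<mu>. norm (x - y) / h * P y))"
    using P(1) by (simp add: int continuous_intros distrib_left)
  finally show ?thesis unfolding w_def .
qed

lemma abs_diff_f_min_le:
  fixes \<mu> :: "'a::euclidean_space measure" and \<psi> f :: "'a \<Rightarrow> real"
  assumes \<mu>: "finite_measure \<mu>" "sets \<mu> = sets borel"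
    and cpt: "compact \<Omega>" and cvx: "convex \<Omega>" and f: "continuous_on \<Omega> f"
    and \<psi>: "continuous_on UNIV \<psi>" "\<And>x. \<psi> x \<ge> 0" and h: "h > 0" and x: "x \<in> \<Omega>"
    and D_pos: "(LINT t:\<Omega>|\<mu>. psi_scaled \<psi> h (x - t)) > 0"
  shows "\<bar>f x - f_min \<mu> \<Omega> \<psi> h f x\<bar> \<le> modulus \<Omega> f h *
    (1 + (LINT y:\<Omega>|\<mu>. norm (x - y) / h * psi_scaled \<psi> h (x - y)) / (LINT t:\<Omega>|\<mu>. psi_scaled \<psi> h (x - t)))"
proof -
  define P where "P y = psi_scaled \<psi> h (x - y)" for y
  define D where "D = (LINT t:\<Omega>|\<mu>. P t)"
  define E where "E = (LINT y:\<Omega>|\<mu>. norm (x - y) / h * P y)"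
  have D: "D > 0" using D_pos unfolding D_def P_def .
  have P_cont: "continuous_on \<Omega> P"
    unfolding P_def by (intro continuous_on_compose2[OF continuous_on_psi_scaled[OF \<psi>(1)]] continuous_intros) auto
  have P_nonneg: "P y \<ge> 0" for y
    unfolding P_def by (rule psi_scaled_nonneg[OF \<psi>(2) h])
  have "f x - f_min \<mu> \<Omega> \<psi> h f x = (LINT y:\<Omega>|\<mu>. (f x - f y) * P y) / D"
    using D P_cont f
    by (simp add: f_min_def P_def[symmetric] D_def[symmetric] left_diff_distrib field_simps
        set_integrable_continuous_on_compact[OF \<mu> cpt] continuous_intros)
  moreover have "\<bar>LINT y:\<Omega>|\<mu>. (f x - f y) * P y\<bar> \<le> modulus \<Omega> f h * (D + E)"
    unfolding D_def E_def
    by (rule abs_set_integral_weighted_diff_le_modulus[OF \<mu> cpt cvx f P_cont P_nonneg h x])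
  ultimately have "\<bar>f x - f_min \<mu> \<Omega> \<psi> h f x\<bar> \<le> modulus \<Omega> f h * (D + E) / D"
    using D by (simp add: divide_right_mono)
  also have "\<dots> = modulus \<Omega> f h * (1 + E / D)"
    using D by (simp add: field_simps)
  finally show ?thesis unfolding E_def D_def P_def .
qed

lemma set_integral_moment_psi_scaled_le_Fourier_L1:
  fixes \<mu> \<mu>s :: "'a::euclidean_space measure" and \<psi> :: "'a \<Rightarrow> real"
  assumes \<mu>: "sets \<mu> = sets borel" and cpt: "compact \<Omega>"
    and \<mu>s: "finite_measure \<mu>s" "sets \<mu>s = sets borel"
      "\<forall>A\<in>sets borel. A \<subseteq> \<Omega> \<longrightarrow> emeasure \<mu>s A = emeasure \<mu> A"
      "integrable lborel (fourier_measure \<mu>s)"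
    and \<psi>: "continuous_on UNIV \<psi>" "\<And>x. \<psi> x \<ge> 0" "(\<lambda>x. norm x * \<psi> x) integrable_on UNIV"
    and h: "h > 0"
    and int: "set_integrable \<mu> \<Omega> (\<lambda>y. norm (x - y) / h * psi_scaled \<psi> h (x - y))"
  shows "(LINT y:\<Omega>|\<mu>. norm (x - y) / h * psi_scaled \<psi> h (x - y)) \<le>
    (\<integral>\<xi>. norm (fourier_measure \<mu>s \<xi>) \<partial>lborel) * integral UNIV (\<lambda>w. norm w * \<psi> w)"
proof -
  define F where "F y = norm (x - y) / h * psi_scaled \<psi> h (x - y)" for y
  define K where "K = (\<integral>\<xi>. norm (fourier_measure \<mu>s \<xi>) \<partial>lborel)"
  define I where "I = integral UNIV (\<lambda>w. norm w * \<psi> w)"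
  have K: "K \<ge> 0" unfolding K_def by simp
  have I: "I \<ge> 0" unfolding I_def using \<psi>(2) by (intro integral_nonneg \<psi>(3)) simp
  have F_eq: "F y = psi_scaled (\<lambda>w. norm w * \<psi> w) h (x - y)" for y
    unfolding F_def psi_scaled_def using h by (simp add: divide_inverse)
  have F_nonneg: "F y \<ge> 0" for y
    unfolding F_def using h psi_scaled_nonneg[of \<psi>, OF \<psi>(2) h] by simp
  have F_cont: "continuous_on UNIV F"
    unfolding F_def using h
    by (intro continuous_intros continuous_on_compose2[OF continuous_on_psi_scaled[OF \<psi>(1)]]) auto
  have F_meas: "(\<lambda>y. ennreal (F y)) \<in> borel_measurable borel"
    by (intro measurable_compose[OF _ measurable_ennreal] borel_measurable_continuous_onI F_cont)
  obtain B where B: "B \<ge> 0" "\<And>y. y \<in> \<Omega> \<Longrightarrow> norm (F y) \<le> B"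
    using continuous_on_compact_bound[OF cpt continuous_on_subset[OF F_cont]] by blast
  have \<Omega>: "\<Omega> \<in> sets borel" using cpt by (simp add: compact_imp_closed)
  have "ennreal (LINT y:\<Omega>|\<mu>. F y) = (\<integral>\<^sup>+y. ennreal (indicator \<Omega> y *\<^sub>R F y) \<partial>\<mu>)"
    using int F_nonneg unfolding set_lebesgue_integral_def set_integrable_def F_def[symmetric]
    by (intro nn_integral_eq_integral[symmetric]) auto
  also have "\<dots> = (\<integral>\<^sup>+y. indicator \<Omega> y * ennreal (F y) \<partial>\<mu>)"
    by (intro nn_integral_cong) (simp add: indicator_def)
  also have "\<dots> = (\<integral>\<^sup>+y. indicator \<Omega> y * ennreal (F y) \<partial>\<mu>s)"
    using \<mu>s(3) by (intro nn_integral_indicator_cong_measure[OF \<mu> \<mu>s(2) \<Omega> _ F_meas]) simp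
  also have "\<dots> \<le> (\<integral>\<^sup>+y. min (F y) B \<partial>\<mu>s)"
    using B(2) F_nonneg by (intro nn_integral_mono) (auto simp: indicator_def)
  also have "\<dots> \<le> ennreal K * (\<integral>\<^sup>+z. min (F z) B \<partial>lborel)"
    unfolding K_def using F_nonneg B(1)
    by (intro nn_integral_le_Fourier_L1_mult_lborel[OF \<mu>s(1,2,4), where B=B] continuous_intros F_cont) auto
  also have "\<dots> \<le> ennreal K * (\<integral>\<^sup>+z. F z \<partial>lborel)"
    by (intro mult_left_mono nn_integral_mono ennreal_leI) simp_all
  also have "(\<integral>\<^sup>+z. F z \<partial>lborel) = (\<integral>\<^sup>+w. ennreal (norm w * \<psi> w) \<partial>lborel)"
    unfolding F_eq using h \<psi>(1)
    by (intro nn_integral_psi_scaled borel_measurable_continuous_onI continuous_intros)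
  also have "\<dots> = ennreal I"
    using nn_integral_has_integral_lebesgue'[OF _ integrable_integral[OF \<psi>(3)]] \<psi>(2)
    unfolding I_def by simp
  finally have "ennreal (LINT y:\<Omega>|\<mu>. F y) \<le> ennreal (K * I)"
    using K by (simp add: ennreal_mult')
  then show ?thesis
    using K I unfolding K_def I_def F_def by (simp add: ennreal_le_iff)
qed

lemma abs_diff_f_min_le_uniform:
  fixes \<Omega> :: "'a::euclidean_space set" and \<mu> \<mu>s :: "'a measure" and \<psi> f :: "'a \<Rightarrow> real"
  assumes cpt: "compact \<Omega>" and cvx: "convex \<Omega>"
    and \<mu>: "finite_measure \<mu>" "sets \<mu> = sets borel"
    and C1: "C1 > 0" "\<forall>x\<in>\<Omega>. \<forall>\<alpha>. 0 < \<alpha> \<and> \<alpha> \<le> 1 \<longrightarrow>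
          measure \<mu> (\<Omega> \<inter> ball x \<alpha>) \<ge> C1 * measure lebesgue (ball x \<alpha>)"
    and \<mu>s: "finite_measure \<mu>s" "sets \<mu>s = sets borel"
      "\<forall>A\<in>sets borel. A \<subseteq> \<Omega> \<longrightarrow> emeasure \<mu>s A = emeasure \<mu> A"
      "integrable lborel (fourier_measure \<mu>s)"
    and \<psi>: "continuous_on UNIV \<psi>" "\<And>x. \<psi> x \<ge> 0" "(\<lambda>x. norm x * \<psi> x) integrable_on UNIV"
      "C\<psi> > 0" "\<And>x. norm x \<le> 1 \<Longrightarrow> \<psi> x \<ge> C\<psi>"
    and f: "continuous_on \<Omega> f" and h: "0 < h" "h \<le> 1" and x: "x \<in> \<Omega>"
  shows "\<bar>f x - f_min \<mu> \<Omega> \<psi> h f x\<bar> \<le>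
    (1 + (\<integral>\<xi>. norm (fourier_measure \<mu>s \<xi>) \<partial>lborel) * integral UNIV (\<lambda>w. norm w * \<psi> w) /
      (C\<psi> * C1 * measure lebesgue (ball (0::'a) 1))) * modulus \<Omega> f h"
proof -
  define K where "K = (\<integral>\<xi>. norm (fourier_measure \<mu>s \<xi>) \<partial>lborel)"
  define I where "I = integral UNIV (\<lambda>w. norm w * \<psi> w)"
  define V where "V = measure lebesgue (ball (0::'a) 1)"
  define D where "D = (LINT t:\<Omega>|\<mu>. psi_scaled \<psi> h (x - t))"
  define E where "E = (LINT y:\<Omega>|\<mu>. norm (x - y) / h * psi_scaled \<psi> h (x - y))"
  have K: "K \<ge> 0" unfolding K_def by simp
  have I: "I \<ge> 0" unfolding I_def using \<psi>(2) by (intro integral_nonneg \<psi>(3)) simp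
  have V: "V > 0" unfolding V_def using content_ball_pos[of 1 "0::'a"] by simp
  have E_int: "set_integrable \<mu> \<Omega> (\<lambda>y. norm (x - y) / h * psi_scaled \<psi> h (x - y))"
    using h(1)
    by (intro set_integrable_continuous_on_compact[OF \<mu> cpt] continuous_intros
        continuous_on_compose2[OF continuous_on_psi_scaled[OF \<psi>(1)]]) auto
  have D_ge: "C\<psi> * C1 * V \<le> D"
    unfolding V_def D_def using C1(2) x h \<psi>(4)
    by (intro psi_scaled_mass_ge[OF \<mu> cpt \<psi>(1,2,5)]) auto
  have D: "D > 0" using D_ge \<psi>(4) C1(1) V by (meson less_le_trans mult_pos_pos)
  have E_le: "E \<le> K * I"
    unfolding E_def K_def I_def
    by (rule set_integral_moment_psi_scaled_le_Fourier_L1[OF \<mu>(2) cpt \<mu>s \<psi>(1-3) h(1) E_int])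
  have E: "E \<ge> 0"
    unfolding E_def set_lebesgue_integral_def using h(1) psi_scaled_nonneg[of \<psi>, OF \<psi>(2) h(1)]
    by (intro Bochner_Integration.integral_nonneg) (simp add: indicator_def)
  have "\<bar>f x - f_min \<mu> \<Omega> \<psi> h f x\<bar> \<le> modulus \<Omega> f h * (1 + E / D)"
    unfolding E_def D_def using D unfolding D_def
    by (rule abs_diff_f_min_le[OF \<mu> cpt cvx f \<psi>(1,2) h(1) x])
  also have "\<dots> \<le> modulus \<Omega> f h * (1 + K * I / (C\<psi> * C1 * V))"
    using frac_le[OF mult_nonneg_nonneg[OF K I] E_le _ D_ge] C1(1) \<psi>(4) V
      modulus_nonneg[OF cpt f x] h(1)
    by (intro mult_left_mono) simp_all
  finally show ?thesis unfolding K_def I_def V_def by (simp add: mult.commute)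
qed

lemma borel_measurable_f_min:
  fixes \<mu> :: "'a::euclidean_space measure" and \<psi> f :: "'a \<Rightarrow> real"
  assumes \<mu>: "finite_measure \<mu>" "sets \<mu> = sets borel" and \<Omega>: "\<Omega> \<in> sets borel"
    and \<psi>: "continuous_on UNIV \<psi>" and f: "continuous_on \<Omega> f"
  shows "f_min \<mu> \<Omega> \<psi> h f \<in> borel_measurable borel"
proof -
  interpret finite_measure \<mu> by (rule \<mu>(1))
  have [measurable]: "psi_scaled \<psi> h \<in> borel_measurable borel"
    by (intro borel_measurable_continuous_onI continuous_on_psi_scaled \<psi>)
  have conv_meas: "(\<lambda>x. LINT y:\<Omega>|\<mu>. g y * psi_scaled \<psi> h (x - y)) \<in> borel_measurable borel"
    if [measurable]: "(\<lambda>y. indicator \<Omega> y * g y) \<in> borel_measurable borel" for g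
  proof -
    have "(\<lambda>(x, y). (indicator \<Omega> y * g y) * psi_scaled \<psi> h (x - y)) \<in> borel_measurable (borel \<Otimes>\<^sub>M borel)"
      by measurable
    then have "(\<lambda>(x, y). (indicator \<Omega> y * g y) * psi_scaled \<psi> h (x - y)) \<in> borel_measurable (borel \<Otimes>\<^sub>M \<mu>)"
      by (subst measurable_cong_sets[OF sets_pair_measure_cong[OF refl \<mu>(2)] refl])
    then show ?thesis
      unfolding set_lebesgue_integral_def
      by (simp add: mult.assoc borel_measurable_lebesgue_integral)
  qed
  have "(\<lambda>y. indicator \<Omega> y * f y) \<in> borel_measurable borel"
    using borel_measurable_continuous_on_indicator[OF \<Omega> f] by simp
  moreover have "(\<lambda>y. indicator \<Omega> y * (1::real)) \<in> borel_measurable borel"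
    using \<Omega> by simp
  ultimately show ?thesis
    unfolding f_min_def[abs_def] using conv_meas[of f] conv_meas[of "\<lambda>_. 1"] by simp
qed

lemma borel_measurable_f_min_error:
  fixes \<mu> :: "'a::euclidean_space measure" and \<psi> f :: "'a \<Rightarrow> real"
  assumes \<mu>: "finite_measure \<mu>" "sets \<mu> = sets borel" and cpt: "compact \<Omega>"
    and \<psi>: "continuous_on UNIV \<psi>" and f: "continuous_on \<Omega> f"
  shows "(\<lambda>x. f x - f_min \<mu> \<Omega> \<psi> h f x) \<in> borel_measurable (lebesgue_on \<Omega>)"
proof (rule borel_measurable_diff)
  show "f \<in> borel_measurable (lebesgue_on \<Omega>)"
    by (rule continuous_imp_measurable_on_sets_lebesgue[OF f fmeasurableD[OF lmeasurable_compact[OF cpt]]])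
  have "\<Omega> \<in> sets borel" using cpt by (simp add: compact_imp_closed)
  then show "f_min \<mu> \<Omega> \<psi> h f \<in> borel_measurable (lebesgue_on \<Omega>)"
    using borel_measurable_f_min[OF \<mu> _ \<psi> f]
    by (intro measurable_restrict_space1 measurable_completion) (simp add: measurable_lborel1)
qed

section \<open>From the pointwise bound to \<open>L\<^sup>p\<close> bounds\<close>

lemma Lp_norm_le_bound:
  fixes g :: "'a::euclidean_space \<Rightarrow> real"
  assumes \<Omega>: "\<Omega> \<in> lmeasurable" and p: "p \<ge> 1"
    and W: "W \<ge> 0" and bnd: "\<And>x. x \<in> \<Omega> \<Longrightarrow> \<bar>g x\<bar> \<le> W"
  shows "Lp_norm \<Omega> g p \<le> max 1 (measure lebesgue \<Omega>) * W"
proof (cases "set_integrable lebesgue \<Omega> (\<lambda>x. \<bar>g x\<bar> powr p)")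
  case True
  define m where "m = measure lebesgue \<Omega>"
  have \<Omega>_fin: "\<Omega> \<in> sets lebesgue" "emeasure lebesgue \<Omega> < \<infinity>"
    using \<Omega> by (auto simp: fmeasurable_def)
  have "(LINT x:\<Omega>|lebesgue. \<bar>g x\<bar> powr p) \<le> (LINT x:\<Omega>|lebesgue. W powr p)"
    using True \<Omega>_fin bnd p
    by (intro set_integral_mono) (auto simp: set_integrable_def intro: powr_mono2)
  also have "\<dots> = m * W powr p"
    unfolding m_def using \<Omega>_fin by (simp add: set_integral_const)
  moreover have "(LINT x:\<Omega>|lebesgue. \<bar>g x\<bar> powr p) \<ge> 0"
    unfolding set_lebesgue_integral_def by (intro Bochner_Integration.integral_nonneg) simp
  ultimately have "Lp_norm \<Omega> g p \<le> (m * W powr p) powr (1 / p)"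
    unfolding Lp_norm_def using p by (intro powr_mono2) simp_all
  also have "\<dots> = m powr (1 / p) * W"
    using p W by (simp add: m_def powr_mult powr_powr)
  also have "m powr (1 / p) \<le> max 1 m"
  proof (cases "m \<le> 1")
    case True then show ?thesis using p by (simp add: m_def powr_le1)
  next
    case False then show ?thesis
      using p powr_mono[of "1 / p" 1 m] by simp
  qed
  finally show ?thesis using W by (simp add: m_def mult_right_mono)
next
  case False
  then have "Lp_norm \<Omega> g p = 0"
    unfolding Lp_norm_def set_integrable_def set_lebesgue_integral_def
    by (simp add: not_integrable_integral_eq)
  then show ?thesis using W by simp
qed

lemma Linf_norm_le_bound:
  fixes g :: "'a::euclidean_space \<Rightarrow> real"
  assumes g: "g \<in> borel_measurable (lebesgue_on \<Omega>)" and bnd: "\<And>x. x \<in> \<Omega> \<Longrightarrow> \<bar>g x\<bar> \<le> W"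
  shows "Linf_norm \<Omega> g \<le> ereal W"
  unfolding Linf_norm_def
proof (rule esssup_I)
  show "(\<lambda>x. ereal \<bar>g x\<bar>) \<in> borel_measurable (lebesgue_on \<Omega>)"
    using g by measurable
  show "AE x in lebesgue_on \<Omega>. ereal \<bar>g x\<bar> \<le> ereal W"
    using bnd by (intro AE_I2) (simp add: space_restrict_space)
qed

theorem theorem3p2:
  fixes \<Omega> :: "'a::euclidean_space set"
    and \<mu> \<mu>s :: "'a measure"
    and \<psi> f :: "'a \<Rightarrow> real"
    and C1 C\<psi> :: real
  assumes dom: "compact \<Omega>" "convex \<Omega>" "interior \<Omega> \<noteq> {}" "lipschitz_boundary \<Omega>"
    and mu_prob: "prob_space \<mu>" "sets \<mu> = sets borel" "emeasure \<mu> \<Omega> = 1"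
    and C1: "C1 > 0"
      "\<forall>x\<in>\<Omega>. \<forall>\<alpha>. 0 < \<alpha> \<and> \<alpha> \<le> 1 \<longrightarrow>
          measure \<mu> (\<Omega> \<inter> ball x \<alpha>) \<ge> C1 * measure lebesgue (ball x \<alpha>)"
    and ext: "finite_measure \<mu>s" "sets \<mu>s = sets borel"
      "\<forall>A\<in>sets borel. A \<subseteq> \<Omega> \<longrightarrow> emeasure \<mu>s A = emeasure \<mu> A"
      "integrable lborel (fourier_measure \<mu>s)"
    and psi: "continuous_on UNIV \<psi>" "\<forall>x. \<psi> x \<ge> 0" "(\<psi> has_integral 1) UNIV"
      "(\<lambda>x. norm x * \<psi> x) integrable_on UNIV"
      "C\<psi> > 0" "\<forall>x. norm x \<le> 1 \<longrightarrow> \<psi> x \<ge> C\<psi>"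
    and f: "continuous_on \<Omega> f"
  shows "\<exists>C>0. \<forall>h. 0 < h \<and> h < 1 \<longrightarrow>
           (\<forall>p::real. p \<ge> 1 \<longrightarrow>
              Lp_norm \<Omega> (\<lambda>x. f x - f_min \<mu> \<Omega> \<psi> h f x) p \<le> C * modulus \<Omega> f h) \<and>
           Linf_norm \<Omega> (\<lambda>x. f x - f_min \<mu> \<Omega> \<psi> h f x) \<le> ereal (C * modulus \<Omega> f h)"
proof -
  interpret prob_space \<mu> by (rule mu_prob(1))
  obtain x0 where x0: "x0 \<in> \<Omega>" using dom(3) interior_subset by blast
  define C0 where "C0 = 1 + (\<integral>\<xi>. norm (fourier_measure \<mu>s \<xi>) \<partial>lborel) * integral UNIV (\<lambda>w. norm w * \<psi> w) /
      (C\<psi> * C1 * measure lebesgue (ball (0::'a) 1))"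
  have "integral UNIV (\<lambda>w. norm w * \<psi> w) \<ge> 0"
    using psi(2) by (intro integral_nonneg psi(4)) simp
  then have C0: "C0 \<ge> 1"
    unfolding C0_def using C1(1) psi(5) content_ball_pos[of 1 "0::'a"] by simp
  define C where "C = C0 * max 1 (measure lebesgue \<Omega>)"
  have "(\<forall>p::real. p \<ge> 1 \<longrightarrow> Lp_norm \<Omega> (\<lambda>x. f x - f_min \<mu> \<Omega> \<psi> h f x) p \<le> C * modulus \<Omega> f h) \<and>
      Linf_norm \<Omega> (\<lambda>x. f x - f_min \<mu> \<Omega> \<psi> h f x) \<le> ereal (C * modulus \<Omega> f h)" if h: "0 < h" "h < 1" for h
  proof -
    define W where "W = C0 * modulus \<Omega> f h"
    have "modulus \<Omega> f h \<ge> 0" using modulus_nonneg[OF dom(1) f x0, of h] h by simp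
    then have W: "0 \<le> W" "W \<le> C * modulus \<Omega> f h"
      using C0 mult_left_mono[OF mult_right_mono[OF max.cobounded1[of 1 "measure lebesgue \<Omega>"]], of _ C0]
      unfolding W_def C_def by (simp_all add: mult.assoc)
    have pointwise: "\<bar>f x - f_min \<mu> \<Omega> \<psi> h f x\<bar> \<le> W" if "x \<in> \<Omega>" for x
      unfolding W_def C0_def using h that
      by (intro abs_diff_f_min_le_uniform[OF dom(1,2) finite_measure_axioms mu_prob(2) C1 ext psi(1)
          psi(2)[rule_format] psi(4,5) psi(6)[rule_format] f]) simp_all
    show ?thesis
      using Lp_norm_le_bound[OF lmeasurable_compact[OF dom(1)] _ W(1) pointwise] W
        Linf_norm_le_bound[OF borel_measurable_f_min_error[OF finite_measure_axioms mu_prob(2) dom(1) psi(1) f]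
          pointwise]
      unfolding C_def W_def by (auto simp: mult_ac intro: order_trans)
  qed
  moreover have "C > 0" unfolding C_def using C0 by (simp add: less_max_iff_disj)
  ultimately show ?thesis by blast
qed

end
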